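(* In the iAPG setting described in the context, assume $\mu>0$, fix $c\in(0,1)$ and $\varepsilon_0>0$, and suppose $\varepsilon_k=\frac{\varepsilon_0}{k+1}\sqrt{\prod_{j=0}^{k-1}(1-c\alpha_j)}$ for all $k\ge1$. Let $\kappa=\frac{L_g}{\gamma_{\mathrm{dec}}\mu}$, $\psi_0=F(x^{(0)})-F^*+(1-(1-c)\alpha_0)\frac{\gamma_0}{2}\|x^*-z^{(0)}\|^2$, $S=\frac{\sqrt\kappa}{2(1-c)^2\underline L}\sum_{k=0}^\infty\frac{\varepsilon_0^2}{(k+1)^2}$, and $\delta_k=\sqrt{\prod_{j=0}^{k-1}(1-c\alpha_j)}\sqrt{\frac{2(\psi_0+S)}{\mu}}$ (empty product $=1$). For $y\in\mathbb R^n$, $\eta>0$ define $\Phi(x;y,\eta)=\langle\nabla g(y),x-y\rangle+\frac1{2\eta}\|x-y\|^2+h(x)+r(x)$ and $x_*^{(k+1)}=\arg\min_x\Phi(x;y^{(k)},\eta_k)$. Then $$\Phi(x^{(k)};y^{(k)},\eta_k)-\Phi(x_*^{(k+1)};y^{(k)},\eta_k)\le\begin{cases}\frac1{2\underline L}\,\mathrm{dist}\big(0,\partial F(x^{(0)})\big)^2,& k=0,\\[2pt] \frac1{2\underline L}\Big(\varepsilon_{k-1}+\frac{3L_g(\delta_k+\delta_{k-1})}{\gamma_{\mathrm{dec}}\sqrt c}\Big)^2,& k\ge1.\end{cases}$$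
   Context: iAPG setting. Let $g,h:\mathbb R^n\to\mathbb R$ and $r:\mathbb R^n\to\mathbb R\cup\{+\infty\}$, where $g$ is convex, $\mu$-strongly convex for some $\mu\ge0$, and differentiable with $L_g$-Lipschitz gradient ($L_g>0$); $h$ is convex and differentiable with $L_h$-Lipschitz gradient; $r$ is proper, closed and convex. Put $H=h+r$, $F=g+H$, and assume $F$ attains its minimum value $F^*$ at some point $x^*$. Fix constants $\gamma_{\mathrm{dec}}\in(0,1)$ and $\underline L>0$ with $\mu\le\underline L\le L_g$. We consider points $x^{(k)},z^{(k)},y^{(k)}\in\mathbb R^n$ and scalars $\eta_k>0,\alpha_k>0,\gamma_k>0,\varepsilon_k\ge0$ ($k\ge0$) such that $x^{(0)}=z^{(0)}\in\mathrm{dom}(H)$, $\gamma_0\ge\mu$, and for every $k\ge0$: (i) $\gamma_{\mathrm{dec}}/L_g<\eta_k\le1/\underline L$; (ii) $\gamma_{k+1}=\alpha_k^2/\eta_k=(1-\alpha_k)\gamma_k+\alpha_k\mu$; (iii) $y^{(k)}=\frac{1}{\alpha_k\gamma_k+\gamma_{k+1}}\big(\alpha_k\gamma_k z^{(k)}+\gamma_{k+1}x^{(k)}\big)$; (iv) $\mathrm{dist}\big(0,\ \nabla g(y^{(k)})+\tfrac1{\eta_k}(x^{(k+1)}-y^{(k)})+\partial H(x^{(k+1)})\big)\le\varepsilon_k$; (v) $g(x^{(k+1)})\le g(y^{(k)})+\langle\nabla g(y^{(k)}),x^{(k+1)}-y^{(k)}\rangle+\frac1{2\eta_k}\|x^{(k+1)}-y^{(k)}\|^2$;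 (vi) $z^{(k+1)}=x^{(k)}+\frac1{\alpha_k}(x^{(k+1)}-x^{(k)})$. Here $\partial$ denotes the convex subdifferential and $\mathrm{dist}(0,S)=\inf_{s\in S}\|s\|$. *)

theory Defs
  imports "HOL-Analysis.Analysis"
begin

text \<open>Extended-real-valued functions (value \<infinity> outside the effective domain).\<close>

definition eproper :: "('a \<Rightarrow> ereal) \<Rightarrow> bool" where
  "eproper f \<longleftrightarrow> (\<forall>x. f x \<noteq> -\<infinity>) \<and> (\<exists>x. f x \<noteq> \<infinity>)"

definition econvex :: "('a::real_vector \<Rightarrow> ereal) \<Rightarrow> bool" where
  "econvex f \<longleftrightarrow> (\<forall>x y t. 0 \<le> t \<longrightarrow> t \<le> 1 \<longrightarrow>
      f ((1 - t) *\<^sub>R x + t *\<^sub>R y) \<le> ereal (1 - t) * f x + ereal t * f y)"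

definition eclosed :: "('a::topological_space \<Rightarrow> ereal) \<Rightarrow> bool" where
  "eclosed f \<longleftrightarrow> closed {(x, t::real). f x \<le> ereal t}"

definition subdiff :: "('a::real_inner \<Rightarrow> ereal) \<Rightarrow> 'a \<Rightarrow> 'a set" where
  "subdiff f x = {s. f x \<noteq> \<infinity> \<and> (\<forall>y. f x + ereal (s \<bullet> (y - x)) \<le> f y)}"

text \<open>dist(0,S) = inf of norms, with inf of the empty set = +\<infinity>.\<close>
definition dist0 :: "'a::real_normed_vector set \<Rightarrow> ereal" where
  "dist0 S = Inf ((\<lambda>s. ereal (norm s)) ` S)"

definition Phi :: "('a::real_inner \<Rightarrow> 'a) \<Rightarrow> ('a \<Rightarrow> real) \<Rightarrow> ('a \<Rightarrow> ereal)
    \<Rightarrow> 'a \<Rightarrow> 'a \<Rightarrow> real \<Rightarrow> ereal" where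
  "Phi dg h r x y \<eta> = ereal (dg y \<bullet> (x - y) + norm (x - y)^2 / (2 * \<eta>) + h x) + r x"

end

theory Submission
  imports Defs
begin

text \<open>
  For every v, the gap \<open>\<Phi>(x\<^sub>k) - \<Phi>(v)\<close> of the proximal subproblem is at most
  \<open>\<eta>\<^sub>k/2 \<parallel>p\<parallel>\<^sup>2 \<le> \<parallel>p\<parallel>\<^sup>2/(2L)\<close> for any element p of the subdifferential of
  \<open>\<Phi>(\<cdot>; y\<^sub>k, \<eta>\<^sub>k)\<close> at \<open>x\<^sub>k\<close>. For k = 0 we have \<open>y\<^sub>0 = x\<^sub>0\<close>, so p can be any
  element of \<open>\<partial>F(x\<^sub>0)\<close>. For k \<ge> 1 we take the inexact residual of step k - 1, which
  has norm about \<open>\<epsilon>\<^sub>k\<^sub>-\<^sub>1\<close>; passing from step k - 1 to step k changes it by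
  \<open>\<nabla>g(y\<^sub>k) - \<nabla>g(y\<^sub>k\<^sub>-\<^sub>1) + (x\<^sub>k - y\<^sub>k)/\<eta>\<^sub>k - (x\<^sub>k - y\<^sub>k\<^sub>-\<^sub>1)/\<eta>\<^sub>k\<^sub>-\<^sub>1\<close>,
  which is small once all iterates are known to lie within \<open>\<delta>\<^sub>k/\<surd>c\<close> of \<open>x\<^sup>*\<close>.

  That localisation comes from the Lyapunov function
  \<open>\<psi>\<^sub>k = F(x\<^sub>k) - F\<^sup>* + (1 - (1-c)\<alpha>\<^sub>k) \<gamma>\<^sub>k/2 \<parallel>x\<^sup>* - z\<^sub>k\<parallel>\<^sup>2\<close>. The usual estimate
  sequence step of accelerated proximal gradient, with the inexactness absorbed by Young's
  inequality, gives \<open>\<psi>\<^sub>k\<^sub>+\<^sub>1 \<le> (1 - c\<alpha>\<^sub>k) \<psi>\<^sub>k + \<surd>\<kappa> \<epsilon>\<^sub>k\<^sup>2/(2(1-c)L)\<close>, and the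
  choice of \<open>\<epsilon>\<^sub>k\<close> makes the accumulated errors summable, so
  \<open>\<psi>\<^sub>k \<le> \<Prod>(1 - c\<alpha>\<^sub>j) (\<psi>\<^sub>0 + S)\<close>. Strong convexity of F turns this into the bounds
  on \<open>\<parallel>x\<^sub>k - x\<^sup>*\<parallel>\<close> and \<open>\<parallel>z\<^sub>k - x\<^sup>*\<parallel>\<close>, and \<open>y\<^sub>k\<close> is a convex combination of the two.
\<close>

section \<open>Directional derivatives and convexity\<close>

lemma has_derivative_difference_quotient:
  fixes g :: "'a::real_normed_vector \<Rightarrow> real"
  assumes "(g has_derivative g') (at y)"
  shows "((\<lambda>t. (g (y + t *\<^sub>R d) - g y) / t) \<longlongrightarrow> g' d) (at_right 0)"
proof -
  have "((\<lambda>t::real. y + t *\<^sub>R d) has_derivative (\<lambda>t. t *\<^sub>R d)) (at 0)"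
    by (auto intro!: derivative_eq_intros)
  from has_derivative_compose[OF this, of g g'] assms
  have "((\<lambda>t. g (y + t *\<^sub>R d)) has_derivative (\<lambda>t. g' (t *\<^sub>R d))) (at 0)" by simp
  moreover have "(\<lambda>t. g' (t *\<^sub>R d)) = (*) (g' d)"
    using has_derivative_bounded_linear[OF assms] by (auto simp: linear_simps)
  ultimately have "((\<lambda>t. g (y + t *\<^sub>R d)) has_real_derivative g' d) (at 0)"
    by (simp add: has_field_derivative_def)
  then have "((\<lambda>t. (g (y + t *\<^sub>R d) - g y) / t) \<longlongrightarrow> g' d) (at 0)"
    unfolding DERIV_def by simp
  then show ?thesis by (rule filterlim_mono) (auto simp: at_within_le_at)
qed

lemma tendsto_le_at_right_0:
  fixes f q :: "real \<Rightarrow> real"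
  assumes "(f \<longlongrightarrow> A) (at_right 0)" "(q \<longlongrightarrow> B) (at_right 0)"
    and "\<And>t. 0 < t \<Longrightarrow> t < 1 \<Longrightarrow> f t \<le> q t"
  shows "A \<le> B"
proof (rule tendsto_le[OF _ assms(2,1)])
  show "\<forall>\<^sub>F t in at_right 0. f t \<le> q t"
    using eventually_at_right_real[of 0 1] by (rule eventually_mono) (auto intro: assms(3))
qed simp

lemma le_of_le_add_scaled:
  fixes X Y Z :: real
  assumes le: "\<And>t. 0 < t \<Longrightarrow> t \<le> 1 \<Longrightarrow> X \<le> Y + t * Z" and "0 \<le> Z"
  shows "X \<le> Y"
proof (rule field_le_epsilon)
  fix e :: real assume "0 < e"
  define t where "t = min 1 (e / (Z + 1))"
  have t: "0 < t" "t \<le> 1" using \<open>0 < e\<close> \<open>0 \<le> Z\<close> by (auto simp: t_def)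
  have "t * Z \<le> e / (Z + 1) * (Z + 1)"
    using \<open>0 < e\<close> \<open>0 \<le> Z\<close> by (intro mult_mono) (auto simp: t_def)
  then have "t * Z \<le> e" using \<open>0 \<le> Z\<close> by simp
  then show "X \<le> Y + e" using le[OF t] by linarith
qed

lemma mult_le_half_sq_add:
  fixes a b q :: real
  assumes "0 < q"
  shows "a * b \<le> q / 2 * b^2 + a^2 / (2 * q)"
proof -
  have "0 \<le> (q * b - a)^2 / (2 * q)" using assms by simp
  also have "\<dots> = q / 2 * b^2 + a^2 / (2 * q) - a * b"
    using assms by (simp add: field_simps power2_eq_square)
  finally show ?thesis by simp
qed

lemma ereal_le_of_le_add_scaled:
  fixes X :: ereal and Y Z :: real
  assumes le: "\<And>t. 0 < t \<Longrightarrow> t \<le> 1 \<Longrightarrow> X \<le> ereal (Y + t * Z)" and "0 \<le> Z"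
  shows "X \<le> ereal Y"
proof (cases X)
  case (real X')
  have "X' \<le> Y"
  proof (rule le_of_le_add_scaled[OF _ \<open>0 \<le> Z\<close>])
    fix t :: real assume "0 < t" "t \<le> 1"
    with le real show "X' \<le> Y + t * Z" by simp
  qed
  with real show ?thesis by simp
next
  case PInf
  with le[of 1] show ?thesis by simp
qed simp

lemma norm_convex_combination_power2_le:
  fixes p q :: "'a::real_normed_vector"
  assumes "0 \<le> l" "l \<le> 1"
  shows "norm (l *\<^sub>R p + (1 - l) *\<^sub>R q)^2 \<le> l * norm p^2 + (1 - l) * norm q^2"
proof -
  have "norm (l *\<^sub>R p + (1 - l) *\<^sub>R q) \<le> l * norm p + (1 - l) * norm q"
    using norm_triangle_ineq[of "l *\<^sub>R p" "(1 - l) *\<^sub>R q"] assms by simp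
  then have "norm (l *\<^sub>R p + (1 - l) *\<^sub>R q)^2 \<le> (l * norm p + (1 - l) * norm q)^2"
    by (rule power_mono) simp
  also have "\<dots> \<le> l * norm p^2 + (1 - l) * norm q^2"
    using convex_power2[unfolded convex_on_def] assms by auto
  finally show ?thesis .
qed

lemma strongly_convex_above_tangent:
  fixes g :: "'a::real_inner \<Rightarrow> real"
  assumes "(g has_derivative (\<lambda>d. a \<bullet> d)) (at y)"
    and "\<And>t. 0 \<le> t \<Longrightarrow> t \<le> 1 \<Longrightarrow>
      g ((1 - t) *\<^sub>R y + t *\<^sub>R u) \<le> (1 - t) * g y + t * g u - m / 2 * t * (1 - t) * norm (y - u)^2"
  shows "g y + a \<bullet> (u - y) + m / 2 * norm (u - y)^2 \<le> g u"
proof -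
  have "a \<bullet> (u - y) \<le> g u - g y - m / 2 * (1 - 0) * norm (y - u)^2"
  proof (rule tendsto_le_at_right_0[OF has_derivative_difference_quotient[OF assms(1)]])
    show "((\<lambda>t. g u - g y - m / 2 * (1 - t) * norm (y - u)^2)
        \<longlongrightarrow> g u - g y - m / 2 * (1 - 0) * norm (y - u)^2) (at_right 0)"
      by (intro tendsto_intros)
    fix t :: real assume t: "0 < t" "t < 1"
    have "y + t *\<^sub>R (u - y) = (1 - t) *\<^sub>R y + t *\<^sub>R u" by (simp add: algebra_simps)
    with assms(2)[of t] t
    have "g (y + t *\<^sub>R (u - y)) - g y \<le> t * (g u - g y - m / 2 * (1 - t) * norm (y - u)^2)"
      by (simp add: algebra_simps)
    then show "(g (y + t *\<^sub>R (u - y)) - g y) / t \<le> g u - g y - m / 2 * (1 - t) * norm (y - u)^2"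
      using t by (simp add: divide_le_eq mult.commute)
  qed
  then show ?thesis by (simp add: norm_minus_commute)
qed

lemma econvex_add_convex_on:
  fixes h :: "'a::real_vector \<Rightarrow> real"
  assumes "convex_on UNIV h" "econvex r"
  shows "econvex (\<lambda>v. ereal (h v) + r v)"
  unfolding econvex_def
proof (intro allI impI)
  fix u v :: 'a and t :: real assume t: "0 \<le> t" "t \<le> 1"
  define w where "w = (1 - t) *\<^sub>R u + t *\<^sub>R v"
  have "ereal (h w) + r w \<le> ereal ((1 - t) * h u + t * h v) + (ereal (1 - t) * r u + ereal t * r v)"
    using convex_onD[OF assms(1), of t u v] assms(2) t
    by (intro add_mono) (auto simp: w_def econvex_def)
  also have "\<dots> = ereal (1 - t) * (ereal (h u) + r u) + ereal t * (ereal (h v) + r v)"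
    using t by (simp add: ereal_pos_distrib ac_simps flip: plus_ereal.simps(1) times_ereal.simps(1))
  finally show "ereal (h w) + r w \<le> ereal (1 - t) * (ereal (h u) + r u) + ereal t * (ereal (h v) + r v)" .
qed

section \<open>Subdifferentials and the proximal model\<close>

lemma econvex_real_combination:
  assumes "econvex \<phi>" "\<And>v. \<phi> v \<noteq> -\<infinity>" "\<phi> u = ereal pu" "\<phi> v = ereal pv" "0 \<le> t" "t \<le> 1"
  obtains pw where "\<phi> ((1 - t) *\<^sub>R u + t *\<^sub>R v) = ereal pw" "pw \<le> (1 - t) * pu + t * pv"
proof -
  have "\<phi> ((1 - t) *\<^sub>R u + t *\<^sub>R v) \<le> ereal (1 - t) * \<phi> u + ereal t * \<phi> v"
    using assms(1,5,6) unfolding econvex_def by blast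
  then have le: "\<phi> ((1 - t) *\<^sub>R u + t *\<^sub>R v) \<le> ereal ((1 - t) * pu + t * pv)"
    using assms(3,4) by simp
  with assms(2) show ?thesis
    by (cases "\<phi> ((1 - t) *\<^sub>R u + t *\<^sub>R v)") (auto intro: that)
qed

lemma subdiff_add_differentiable:
  fixes g :: "'a::real_inner \<Rightarrow> real"
  assumes g_grad: "(g has_derivative (\<lambda>d. a \<bullet> d)) (at x)"
    and conv: "econvex \<phi>" and not_minf: "\<And>v. \<phi> v \<noteq> -\<infinity>"
    and s: "s \<in> subdiff (\<lambda>v. ereal (g v) + \<phi> v) x"
  shows "s - a \<in> subdiff \<phi> x"
proof -
  from s have "\<phi> x \<noteq> \<infinity>"
    and sub: "\<And>u. ereal (g x) + \<phi> x + ereal (s \<bullet> (u - x)) \<le> ereal (g u) + \<phi> u"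
    unfolding subdiff_def by auto
  with not_minf obtain px where px: "\<phi> x = ereal px" by (cases "\<phi> x") auto
  have "\<phi> x + ereal ((s - a) \<bullet> (u - x)) \<le> \<phi> u" for u
  proof (cases "\<phi> u")
    case (real pu)
    have "s \<bullet> (u - x) - (pu - px) \<le> a \<bullet> (u - x)"
    proof (rule tendsto_le_at_right_0[OF _ has_derivative_difference_quotient[OF g_grad]])
      fix t :: real assume t: "0 < t" "t < 1"
      obtain pw where pw: "\<phi> ((1 - t) *\<^sub>R x + t *\<^sub>R u) = ereal pw" "pw \<le> (1 - t) * px + t * pu"
        using econvex_real_combination[OF conv not_minf px real, of t] t by auto
      have w: "(1 - t) *\<^sub>R x + t *\<^sub>R u = x + t *\<^sub>R (u - x)" by (simp add: algebra_simps)
      have "g x + px + t * (s \<bullet> (u - x)) \<le> g (x + t *\<^sub>R (u - x)) + pw"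
        using sub[of "x + t *\<^sub>R (u - x)"] pw(1) px w by simp
      with pw(2) have "t * (s \<bullet> (u - x) - (pu - px)) \<le> g (x + t *\<^sub>R (u - x)) - g x"
        by (simp add: algebra_simps)
      then show "s \<bullet> (u - x) - (pu - px) \<le> (g (x + t *\<^sub>R (u - x)) - g x) / t"
        using t by (simp add: le_divide_eq mult.commute)
    qed simp
    then show ?thesis by (simp add: px real inner_diff_left)
  qed (use not_minf in auto)
  with px show ?thesis unfolding subdiff_def by auto
qed

lemma strongly_convex_minimizer_growth:
  fixes g :: "'a::real_inner \<Rightarrow> real"
  assumes g_strong: "\<And>u v t. 0 \<le> t \<Longrightarrow> t \<le> 1 \<Longrightarrow>
      g ((1 - t) *\<^sub>R u + t *\<^sub>R v) \<le> (1 - t) * g u + t * g v - \<mu> / 2 * t * (1 - t) * norm (u - v)^2"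
    and "0 \<le> \<mu>" and conv: "econvex \<phi>" and not_minf: "\<And>v. \<phi> v \<noteq> -\<infinity>"
    and min: "\<And>w. ereal (g xs) + \<phi> xs \<le> ereal (g w) + \<phi> w"
    and ps: "\<phi> xs = ereal ps" and pv: "\<phi> v = ereal pv"
  shows "\<mu> / 2 * norm (v - xs)^2 \<le> (g v + pv) - (g xs + ps)"
proof (rule le_of_le_add_scaled)
  fix t :: real assume t: "0 < t" "t \<le> 1"
  obtain pw where pw: "\<phi> ((1 - t) *\<^sub>R xs + t *\<^sub>R v) = ereal pw" "pw \<le> (1 - t) * ps + t * pv"
    using econvex_real_combination[OF conv not_minf ps pv, of t] t by auto
  have "g xs + ps \<le> g ((1 - t) *\<^sub>R xs + t *\<^sub>R v) + pw"
    using min[of "(1 - t) *\<^sub>R xs + t *\<^sub>R v"] ps pw(1) by simp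
  with g_strong[of t xs v] pw(2) t
  have "t * (\<mu> / 2 * (1 - t) * norm (v - xs)^2) \<le> t * ((g v + pv) - (g xs + ps))"
    by (simp add: algebra_simps norm_minus_commute)
  with t have "\<mu> / 2 * (1 - t) * norm (v - xs)^2 \<le> (g v + pv) - (g xs + ps)"
    by simp
  then show "\<mu> / 2 * norm (v - xs)^2 \<le> (g v + pv) - (g xs + ps) + t * (\<mu> / 2 * norm (v - xs)^2)"
    by (simp add: algebra_simps add_divide_distrib diff_divide_distrib)
qed (use \<open>0 \<le> \<mu>\<close> in simp)

lemma quadratic_model_gap_le:
  fixes a s x y v :: "'a::real_inner"
  assumes "0 < \<eta>" and sub: "Hx + s \<bullet> (v - x) \<le> Hv"
  shows "(a \<bullet> (x - y) + norm (x - y)^2 / (2 * \<eta>) + Hx)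
       - (a \<bullet> (v - y) + norm (v - y)^2 / (2 * \<eta>) + Hv)
       \<le> \<eta> / 2 * norm (a + (1 / \<eta>) *\<^sub>R (x - y) + s)^2"
proof -
  define p where "p = a + (1 / \<eta>) *\<^sub>R (x - y) + s"
  define d where "d = v - x"
  have vy: "v - y = d + (x - y)" by (simp add: d_def)
  have "0 \<le> norm (\<eta> *\<^sub>R p + d)^2 / (2 * \<eta>)" using \<open>0 < \<eta>\<close> by simp
  also have "norm (\<eta> *\<^sub>R p + d)^2 = \<eta>^2 * norm p^2 + 2 * \<eta> * (p \<bullet> d) + norm d^2"
    by (simp only: power2_norm_eq_inner) (simp add: inner_simps inner_commute power2_eq_square)
  also have "(\<eta>^2 * norm p^2 + 2 * \<eta> * (p \<bullet> d) + norm d^2) / (2 * \<eta>)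
      = \<eta> / 2 * norm p^2 + p \<bullet> d + norm d^2 / (2 * \<eta>)"
    using \<open>0 < \<eta>\<close> by (simp add: field_simps power2_eq_square)
  also have "p \<bullet> d = a \<bullet> d + (d \<bullet> (x - y)) / \<eta> + s \<bullet> d"
    by (simp add: p_def inner_simps inner_commute)
  finally have "0 \<le> \<eta> / 2 * norm p^2 + a \<bullet> d + (d \<bullet> (x - y)) / \<eta> + s \<bullet> d + norm d^2 / (2 * \<eta>)"
    by simp
  moreover have "norm (v - y)^2 / (2 * \<eta>) = norm d^2 / (2 * \<eta>) + (d \<bullet> (x - y)) / \<eta> + norm (x - y)^2 / (2 * \<eta>)"
    unfolding vy using \<open>0 < \<eta>\<close>
    by (simp add: power2_norm_eq_inner inner_simps inner_commute field_simps)
  moreover have "a \<bullet> (v - y) = a \<bullet> d + a \<bullet> (x - y)" by (simp add: vy inner_simps)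
  ultimately show ?thesis using sub unfolding p_def[symmetric] d_def[symmetric] by linarith
qed

lemma Phi_gap_le:
  fixes h :: "'a::real_inner \<Rightarrow> real"
  assumes s: "s \<in> subdiff (\<lambda>v. ereal (h v) + r v) x" and "0 < \<eta>" and not_minf: "\<And>v. r v \<noteq> -\<infinity>"
  shows "Phi dg h r x y \<eta> - Phi dg h r v y \<eta> \<le> ereal (\<eta> / 2 * norm (dg y + (1 / \<eta>) *\<^sub>R (x - y) + s)^2)"
proof -
  from s have "r x \<noteq> \<infinity>"
    and sub: "ereal (h x) + r x + ereal (s \<bullet> (v - x)) \<le> ereal (h v) + r v"
    unfolding subdiff_def by auto
  with not_minf obtain rx where rx: "r x = ereal rx" by (cases "r x") auto
  show ?thesis
  proof (cases "r v")
    case (real rv)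
    with sub rx have "h x + rx + s \<bullet> (v - x) \<le> h v + rv" by simp
    from quadratic_model_gap_le[OF \<open>0 < \<eta>\<close> this, of "dg y" y] show ?thesis
      by (simp add: Phi_def rx real)
  qed (use not_minf rx in \<open>auto simp: Phi_def\<close>)
qed

lemma dist0_le_obtains:
  assumes "dist0 S \<le> ereal e" "0 < t"
  obtains s where "s \<in> S" "norm s < e + t"
proof -
  have "Inf ((\<lambda>s. ereal (norm s)) ` S) < ereal (e + t)"
    using assms unfolding dist0_def by (simp add: order.strict_trans1)
  then show ?thesis by (auto simp: Inf_less_iff intro: that)
qed

lemma le_dist0_power2_divide:
  fixes S :: "'a::real_normed_vector set"
  assumes bound: "\<And>s. s \<in> S \<Longrightarrow> G \<le> ereal (norm s ^ 2 / (2 * L))" and "0 < L"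
  shows "G \<le> dist0 S ^ 2 / ereal (2 * L)"
proof (cases "S = {}")
  case True
  then show ?thesis using \<open>0 < L\<close> by (simp add: dist0_def top_ereal_def power2_eq_square)
next
  case False
  then obtain s0 where s0: "s0 \<in> S" by auto
  have "0 \<le> dist0 S" "dist0 S \<le> ereal (norm s0)"
    unfolding dist0_def using s0 by (auto intro: Inf_greatest Inf_lower)
  then obtain d where d: "dist0 S = ereal d" "0 \<le> d" by (cases "dist0 S") auto
  show ?thesis
  proof (cases "G \<le> 0")
    case True
    then show ?thesis using d \<open>0 < L\<close> by (simp add: order_trans[OF True])
  next
    case False
    with bound[OF s0] obtain gg where gg: "G = ereal gg" "0 < gg" by (cases G) auto
    have "ereal (sqrt (2 * L * gg)) \<le> dist0 S"
      unfolding dist0_def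
    proof (rule Inf_greatest, clarify)
      fix s assume "s \<in> S"
      with bound gg \<open>0 < L\<close> have "2 * L * gg \<le> norm s ^ 2" by (simp add: field_simps)
      then show "ereal (sqrt (2 * L * gg)) \<le> ereal (norm s)"
        using real_sqrt_le_mono by fastforce
    qed
    with d have "sqrt (2 * L * gg) \<le> d" by simp
    then have "(sqrt (2 * L * gg))^2 \<le> d^2" using gg \<open>0 < L\<close> by (intro power_mono) auto
    then have "2 * L * gg \<le> d^2" using gg \<open>0 < L\<close> by simp
    then show ?thesis using gg d \<open>0 < L\<close> by (simp add: field_simps power2_eq_square)
  qed
qed

section \<open>One step of accelerated proximal gradient\<close>

lemma apg_momentum_point:
  fixes xk z y xs :: "'a::real_inner"
  assumes "0 < \<alpha>" "\<alpha> \<le> 1" "0 < \<gamma>" "0 \<le> \<mu>" "0 < G"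
    and G: "G = (1 - \<alpha>) * \<gamma> + \<alpha> * \<mu>"
    and y: "y = (1 / (\<alpha> * \<gamma> + G)) *\<^sub>R ((\<alpha> * \<gamma>) *\<^sub>R z + G *\<^sub>R xk)"
  obtains v where "y = (1 - \<alpha>) *\<^sub>R xk + \<alpha> *\<^sub>R v"
    and "G * norm (xs - v)^2 \<le> (1 - \<alpha>) * \<gamma> * norm (xs - z)^2 + \<alpha> * \<mu> * norm (xs - y)^2"
proof
  define l where "l = (1 - \<alpha>) * \<gamma> / G"
  have l: "0 \<le> l" "l \<le> 1" "G * l = (1 - \<alpha>) * \<gamma>" "G * (1 - l) = \<alpha> * \<mu>"
    using assms by (auto simp: l_def field_simps)
  define v where "v = (1 / G) *\<^sub>R (((1 - \<alpha>) * \<gamma>) *\<^sub>R z + (\<alpha> * \<mu>) *\<^sub>R y)"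
  have Gv: "G *\<^sub>R v = ((1 - \<alpha>) * \<gamma>) *\<^sub>R z + (\<alpha> * \<mu>) *\<^sub>R y"
    using \<open>0 < G\<close> by (simp add: v_def)
  have "0 < \<alpha> * \<gamma> + G" using assms(1,3,5) by (simp add: add_pos_pos)
  with y have yA: "(\<alpha> * \<gamma> + G) *\<^sub>R y = (\<alpha> * \<gamma>) *\<^sub>R z + G *\<^sub>R xk"
    by simp
  have "G *\<^sub>R ((1 - \<alpha>) *\<^sub>R xk + \<alpha> *\<^sub>R v) = ((1 - \<alpha>) * G) *\<^sub>R xk + \<alpha> *\<^sub>R (G *\<^sub>R v)"
    by (simp add: algebra_simps)
  also have "\<dots> = (1 - \<alpha>) *\<^sub>R ((\<alpha> * \<gamma>) *\<^sub>R z + G *\<^sub>R xk) + (\<alpha> * \<alpha> * \<mu>) *\<^sub>R y"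
    unfolding Gv by (simp add: algebra_simps)
  also have "\<dots> = (1 - \<alpha>) *\<^sub>R ((\<alpha> * \<gamma> + G) *\<^sub>R y) + (\<alpha> * \<alpha> * \<mu>) *\<^sub>R y"
    unfolding yA ..
  also have "\<dots> = ((1 - \<alpha>) * (\<alpha> * \<gamma> + G) + \<alpha> * \<alpha> * \<mu>) *\<^sub>R y"
    by (simp add: algebra_simps)
  also have "(1 - \<alpha>) * (\<alpha> * \<gamma> + G) + \<alpha> * \<alpha> * \<mu> = G"
    unfolding G by (simp add: algebra_simps)
  finally show "y = (1 - \<alpha>) *\<^sub>R xk + \<alpha> *\<^sub>R v" using \<open>0 < G\<close> by simp
  have "1 - l = \<alpha> * \<mu> / G" using l(4) \<open>0 < G\<close> by (simp add: eq_divide_eq mult.commute)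
  then have "v = l *\<^sub>R z + (1 - l) *\<^sub>R y"
    by (simp add: v_def l_def scaleR_add_right)
  then have "xs - v = l *\<^sub>R (xs - z) + (1 - l) *\<^sub>R (xs - y)"
    by (simp add: algebra_simps)
  with norm_convex_combination_power2_le[OF l(1,2)]
  have "G * norm (xs - v)^2 \<le> G * (l * norm (xs - z)^2 + (1 - l) * norm (xs - y)^2)"
    using \<open>0 < G\<close> by simp
  also have "\<dots> = (G * l) * norm (xs - z)^2 + (G * (1 - l)) * norm (xs - y)^2"
    by (simp add: algebra_simps)
  finally show "G * norm (xs - v)^2 \<le> (1 - \<alpha>) * \<gamma> * norm (xs - z)^2 + \<alpha> * \<mu> * norm (xs - y)^2"
    unfolding l(3,4) .
qed

lemma prox_grad_step_at_convex_combination: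
  fixes a s xk xs xp y :: "'a::real_inner"
  assumes Hs: "Hp + s \<bullet> (xs - xp) \<le> Hs" and Hk: "Hp + s \<bullet> (xk - xp) \<le> Hk"
    and gp: "gp \<le> gy + a \<bullet> (xp - y) + norm (xp - y)^2 / (2 * \<eta>)"
    and gs: "gy + a \<bullet> (xs - y) + \<mu> / 2 * norm (xs - y)^2 \<le> gs"
    and gk: "gy + a \<bullet> (xk - y) \<le> gk"
    and "0 < \<eta>" "0 \<le> \<alpha>" "\<alpha> \<le> 1"
    and u: "u = (1 - \<alpha>) *\<^sub>R xk + \<alpha> *\<^sub>R xs"
  shows "gp + Hp \<le> (1 - \<alpha>) * (gk + Hk) + \<alpha> * (gs + Hs) - \<alpha> * \<mu> / 2 * norm (xs - y)^2
      + (a + (1 / \<eta>) *\<^sub>R (xp - y) + s) \<bullet> (xp - u) + norm (u - y)^2 / (2 * \<eta>) - norm (u - xp)^2 / (2 * \<eta>)"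
proof -
  have H_comb: "Hp + s \<bullet> (u - xp) \<le> (1 - \<alpha>) * Hk + \<alpha> * Hs"
  proof -
    have "s \<bullet> (u - xp) = (1 - \<alpha>) * (s \<bullet> (xk - xp)) + \<alpha> * (s \<bullet> (xs - xp))"
      by (simp add: u algebra_simps inner_diff_right)
    then show ?thesis
      using mult_left_mono[OF Hk, of "1 - \<alpha>"] mult_left_mono[OF Hs, of \<alpha>] \<open>0 \<le> \<alpha>\<close> \<open>\<alpha> \<le> 1\<close>
      by (simp add: algebra_simps)
  qed
  have g_comb: "gy + a \<bullet> (u - y) + \<alpha> * \<mu> / 2 * norm (xs - y)^2 \<le> (1 - \<alpha>) * gk + \<alpha> * gs"
  proof -
    have "a \<bullet> (u - y) = (1 - \<alpha>) * (a \<bullet> (xk - y)) + \<alpha> * (a \<bullet> (xs - y))"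
      by (simp add: u algebra_simps inner_diff_right)
    then show ?thesis
      using mult_left_mono[OF gk, of "1 - \<alpha>"] mult_left_mono[OF gs, of \<alpha>] \<open>0 \<le> \<alpha>\<close> \<open>\<alpha> \<le> 1\<close>
      by (simp add: algebra_simps)
  qed
  have three_point: "norm (xp - y)^2 = norm (u - y)^2 - norm (u - xp)^2 + 2 * ((xp - y) \<bullet> (xp - u))"
    using dot_norm[of "u - xp" "xp - y"] by (simp add: inner_commute inner_diff_right inner_diff_left)
  have "norm (xp - y)^2 / (2 * \<eta>)
      = norm (u - y)^2 / (2 * \<eta>) - norm (u - xp)^2 / (2 * \<eta>) + (1 / \<eta>) * ((xp - y) \<bullet> (xp - u))"
    unfolding three_point using \<open>0 < \<eta>\<close> by (simp add: field_simps)
  moreover have "(a + (1 / \<eta>) *\<^sub>R (xp - y) + s) \<bullet> (xp - u)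
      = a \<bullet> (xp - u) + s \<bullet> (xp - u) + (1 / \<eta>) * ((xp - y) \<bullet> (xp - u))"
    by (simp add: inner_add_left)
  moreover have "a \<bullet> (xp - y) = a \<bullet> (xp - u) + a \<bullet> (u - y)" "s \<bullet> (u - xp) = - (s \<bullet> (xp - u))"
    by (simp_all add: inner_diff_right)
  ultimately show ?thesis
    using gp g_comb H_comb by (simp only: distrib_left[of "1 - \<alpha>"] distrib_left[of \<alpha>])
qed

text \<open>The estimate sequence inequality for one step from \<open>xk\<close> to \<open>xp\<close>: the g-values
  \<open>gk, gp, gs, gy\<close> and H-values \<open>Hk, Hp, Hs\<close> are taken at \<open>xk\<close>, \<open>xp\<close>, the reference
  point \<open>xs\<close> and \<open>y\<close>, and \<open>s\<close> is a subgradient of H at \<open>xp\<close>.\<close>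

lemma apg_step_estimate:
  fixes a s xk xs xp y z zp :: "'a::real_inner"
  assumes Hs: "Hp + s \<bullet> (xs - xp) \<le> Hs" and Hk: "Hp + s \<bullet> (xk - xp) \<le> Hk"
    and gp: "gp \<le> gy + a \<bullet> (xp - y) + norm (xp - y)^2 / (2 * \<eta>)"
    and gs: "gy + a \<bullet> (xs - y) + \<mu> / 2 * norm (xs - y)^2 \<le> gs"
    and gk: "gy + a \<bullet> (xk - y) \<le> gk"
    and "0 < \<eta>" "0 < \<alpha>" "\<alpha> \<le> 1" "0 < \<gamma>" "0 \<le> \<mu>"
    and G1: "G = \<alpha>^2 / \<eta>" and G2: "G = (1 - \<alpha>) * \<gamma> + \<alpha> * \<mu>"
    and y: "y = (1 / (\<alpha> * \<gamma> + G)) *\<^sub>R ((\<alpha> * \<gamma>) *\<^sub>R z + G *\<^sub>R xk)"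
    and zp: "zp = xk + (1 / \<alpha>) *\<^sub>R (xp - xk)"
  shows "(gp + Hp) - (gs + Hs) + G / 2 * norm (xs - zp)^2
     \<le> (1 - \<alpha>) * ((gk + Hk) - (gs + Hs) + \<gamma> / 2 * norm (xs - z)^2)
        + \<alpha> * ((a + (1 / \<eta>) *\<^sub>R (xp - y) + s) \<bullet> (zp - xs))"
proof -
  have "0 < G" using G1 \<open>0 < \<eta>\<close> \<open>0 < \<alpha>\<close> by simp
  then obtain v where yv: "y = (1 - \<alpha>) *\<^sub>R xk + \<alpha> *\<^sub>R v"
    and conv: "G * norm (xs - v)^2 \<le> (1 - \<alpha>) * \<gamma> * norm (xs - z)^2 + \<alpha> * \<mu> * norm (xs - y)^2"
    using apg_momentum_point[OF \<open>0 < \<alpha>\<close> \<open>\<alpha> \<le> 1\<close> \<open>0 < \<gamma>\<close> \<open>0 \<le> \<mu>\<close> _ G2 y] by blast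
  define u where "u = (1 - \<alpha>) *\<^sub>R xk + \<alpha> *\<^sub>R xs"
  define w where "w = a + (1 / \<eta>) *\<^sub>R (xp - y) + s"
  have "\<alpha> *\<^sub>R zp = \<alpha> *\<^sub>R xk + (xp - xk)"
    using zp \<open>0 < \<alpha>\<close> by (simp add: scaleR_add_right)
  then have "xp = (1 - \<alpha>) *\<^sub>R xk + \<alpha> *\<^sub>R zp" by (simp add: algebra_simps)
  then have xpu: "xp - u = \<alpha> *\<^sub>R (zp - xs)" by (simp add: u_def algebra_simps)
  have uy: "u - y = \<alpha> *\<^sub>R (xs - v)" by (simp add: u_def yv algebra_simps)
  have "gp + Hp \<le> (1 - \<alpha>) * (gk + Hk) + \<alpha> * (gs + Hs) - \<alpha> * \<mu> / 2 * norm (xs - y)^2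
      + w \<bullet> (xp - u) + norm (u - y)^2 / (2 * \<eta>) - norm (u - xp)^2 / (2 * \<eta>)"
    unfolding w_def using prox_grad_step_at_convex_combination[OF Hs Hk gp gs gk \<open>0 < \<eta>\<close> _ \<open>\<alpha> \<le> 1\<close> u_def]
      \<open>0 < \<alpha>\<close> by simp
  moreover have "norm (u - xp)^2 / (2 * \<eta>) = G / 2 * norm (xs - zp)^2"
  proof -
    have "u - xp = \<alpha> *\<^sub>R (xs - zp)" using xpu by (simp add: algebra_simps)
    then show ?thesis by (simp add: G1 power_mult_distrib \<open>0 < \<alpha>\<close> abs_of_pos)
  qed
  moreover have "norm (u - y)^2 / (2 * \<eta>) = G / 2 * norm (xs - v)^2"
    by (simp add: uy G1 power_mult_distrib \<open>0 < \<alpha>\<close> abs_of_pos)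
  moreover have "w \<bullet> (xp - u) = \<alpha> * (w \<bullet> (zp - xs))" by (simp add: xpu)
  moreover have "(1 - \<alpha>) * ((gk + Hk) - (gs + Hs) + \<gamma> / 2 * norm (xs - z)^2)
      = (1 - \<alpha>) * (gk + Hk) + \<alpha> * (gs + Hs) - (gs + Hs) + (1 - \<alpha>) * \<gamma> * norm (xs - z)^2 / 2"
    by (simp add: algebra_simps)
  moreover have "G / 2 * norm (xs - v)^2 = G * norm (xs - v)^2 / 2"
    "\<alpha> * \<mu> / 2 * norm (xs - y)^2 = \<alpha> * \<mu> * norm (xs - y)^2 / 2"
    by simp_all
  ultimately show ?thesis
    using conv unfolding w_def[symmetric] by linarith
qed

lemma norm_residual_shift_le:
  fixes a a' s xp y y' :: "'a::real_normed_vector"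
  assumes "0 < \<eta>" "0 < \<eta>'"
  shows "norm (a' + (1 / \<eta>') *\<^sub>R (xp - y') + s)
    \<le> norm (a + (1 / \<eta>) *\<^sub>R (xp - y) + s) + norm (a' - a) + norm (xp - y') / \<eta>' + norm (xp - y) / \<eta>"
proof -
  define w where "w = a + (1 / \<eta>) *\<^sub>R (xp - y) + s"
  have "a' + (1 / \<eta>') *\<^sub>R (xp - y') + s = w + (a' - a) + (1 / \<eta>') *\<^sub>R (xp - y') - (1 / \<eta>) *\<^sub>R (xp - y)"
    by (simp add: w_def algebra_simps)
  then have "norm (a' + (1 / \<eta>') *\<^sub>R (xp - y') + s)
      \<le> norm (w + (a' - a) + (1 / \<eta>') *\<^sub>R (xp - y')) + norm ((1 / \<eta>) *\<^sub>R (xp - y))"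
    by (simp only: norm_triangle_ineq4)
  also have "\<dots> \<le> norm w + norm (a' - a) + norm ((1 / \<eta>') *\<^sub>R (xp - y')) + norm ((1 / \<eta>) *\<^sub>R (xp - y))"
    using norm_triangle_ineq order_trans add_right_mono by meson
  finally show ?thesis using assms by (simp add: w_def)
qed

section \<open>The inexact accelerated proximal gradient iteration\<close>

locale iapg =
  fixes g h :: "'a::real_inner \<Rightarrow> real" and dg :: "'a \<Rightarrow> 'a" and r :: "'a \<Rightarrow> ereal"
    and \<mu> Lg \<gamma>dec Lu Fstar :: real and xstar :: 'a
    and x z y :: "nat \<Rightarrow> 'a" and \<eta> \<alpha> \<gamma> eps :: "nat \<Rightarrow> real"
  assumes g_grad: "\<And>v. (g has_derivative (\<lambda>d. dg v \<bullet> d)) (at v)"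
    and \<mu>_nonneg: "0 \<le> \<mu>"
    and g_strong: "\<And>u v t. 0 \<le> t \<Longrightarrow> t \<le> 1 \<Longrightarrow>
      g ((1 - t) *\<^sub>R u + t *\<^sub>R v) \<le> (1 - t) * g u + t * g v - \<mu> / 2 * t * (1 - t) * norm (u - v)^2"
    and Lg_pos: "0 < Lg"
    and g_lip: "\<And>u v. norm (dg u - dg v) \<le> Lg * norm (u - v)"
    and h_convex: "convex_on UNIV h"
    and r_not_minf: "\<And>v. r v \<noteq> -\<infinity>" and r_convex: "econvex r"
    and F_min: "\<And>v. ereal (g xstar + h xstar) + r xstar \<le> ereal (g v + h v) + r v"
    and F_star: "ereal (g xstar + h xstar) + r xstar = ereal Fstar"
    and \<gamma>dec: "0 < \<gamma>dec" "\<gamma>dec < 1"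
    and Lu: "0 < Lu" "\<mu> \<le> Lu"
    and pos: "\<And>k. 0 < \<eta> k" "\<And>k. 0 < \<alpha> k" "\<And>k. 0 < \<gamma> k" "\<And>k. 0 \<le> eps k"
    and init: "x 0 = z 0" "r (x 0) \<noteq> \<infinity>" "\<mu> \<le> \<gamma> 0"
    and step_i: "\<And>k. \<gamma>dec / Lg < \<eta> k \<and> \<eta> k \<le> 1 / Lu"
    and step_ii: "\<And>k. \<gamma> (Suc k) = \<alpha> k ^ 2 / \<eta> k \<and> \<alpha> k ^ 2 / \<eta> k = (1 - \<alpha> k) * \<gamma> k + \<alpha> k * \<mu>"
    and step_iii: "\<And>k. y k = (1 / (\<alpha> k * \<gamma> k + \<gamma> (Suc k))) *\<^sub>R
                           ((\<alpha> k * \<gamma> k) *\<^sub>R z k + \<gamma> (Suc k) *\<^sub>R x k)"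
    and step_iv: "\<And>k. dist0 {dg (y k) + (1 / \<eta> k) *\<^sub>R (x (Suc k) - y k) + s | s.
                            s \<in> subdiff (\<lambda>v. ereal (h v) + r v) (x (Suc k))} \<le> ereal (eps k)"
    and step_v: "\<And>k. g (x (Suc k)) \<le> g (y k) + dg (y k) \<bullet> (x (Suc k) - y k)
                        + norm (x (Suc k) - y k)^2 / (2 * \<eta> k)"
    and step_vi: "\<And>k. z (Suc k) = x k + (1 / \<alpha> k) *\<^sub>R (x (Suc k) - x k)"
begin

text \<open>Real-valued F; it is only evaluated on the effective domain of r, where
  \<open>real_of_ereal\<close> loses nothing.\<close>

definition Fval :: "'a \<Rightarrow> real" where
  "Fval v = g v + h v + real_of_ereal (r v)"

lemma F_split: "ereal (g v + h v) + r v = ereal (g v) + (ereal (h v) + r v)"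
  by (simp flip: add.assoc)

lemma inexact_prox_residual:
  assumes "0 < t"
  obtains s where "s \<in> subdiff (\<lambda>v. ereal (h v) + r v) (x (Suc k))"
    and "norm (dg (y k) + (1 / \<eta> k) *\<^sub>R (x (Suc k) - y k) + s) < eps k + t"
  using dist0_le_obtains[OF step_iv assms] by blast

lemma r_x_finite: "r (x k) = ereal (real_of_ereal (r (x k)))"
proof (cases k)
  case 0
  with init(2) r_not_minf show ?thesis by (cases "r (x k)") auto
next
  case (Suc j)
  obtain s where "s \<in> subdiff (\<lambda>v. ereal (h v) + r v) (x (Suc j))"
    using inexact_prox_residual[of 1 j] by auto
  then have "r (x k) \<noteq> \<infinity>" by (auto simp: subdiff_def Suc)
  with r_not_minf show ?thesis by (cases "r (x k)") auto
qed

lemma r_xstar_finite: "r xstar = ereal (real_of_ereal (r xstar))"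
  using F_star r_not_minf[of xstar] by (cases "r xstar") auto

lemma Fstar_eq: "Fstar = Fval xstar"
  using F_star r_xstar_finite by (simp add: Fval_def) (metis plus_ereal.simps(1) ereal.inject)

lemma F_x_eq: "ereal (g (x k) + h (x k)) + r (x k) = ereal (Fval (x k))"
  by (subst r_x_finite) (simp add: Fval_def)

lemma Fstar_le: "Fstar \<le> Fval (x k)"
  using F_min[of "x k"] F_star F_x_eq[of k] by simp

lemma alpha_sq_eq: "\<alpha> k ^ 2 = \<eta> k * \<gamma> (Suc k)"
  using step_ii[of k] pos(1)[of k] by (simp add: field_simps)

lemma inv_eta_le: "1 / \<eta> k \<le> Lg / \<gamma>dec"
  using step_i[of k] pos(1)[of k] \<gamma>dec Lg_pos by (simp add: field_simps)

lemma alpha_le_one_if_gamma_ge: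
  assumes "\<mu> \<le> \<gamma> k"
  shows "\<alpha> k \<le> 1"
proof (rule ccontr)
  assume "\<not> \<alpha> k \<le> 1"
  have "\<gamma> (Suc k) = \<gamma> k - \<alpha> k * (\<gamma> k - \<mu>)" using step_ii[of k] by (simp add: algebra_simps)
  also have "\<dots> \<le> \<mu>"
    using \<open>\<not> \<alpha> k \<le> 1\<close> assms mult_right_mono[of 1 "\<alpha> k" "\<gamma> k - \<mu>"] by simp
  finally have "\<alpha> k ^ 2 \<le> \<eta> k * \<mu>" unfolding alpha_sq_eq using pos(1)[of k] by simp
  also have "\<dots> \<le> (1 / Lu) * Lu" using step_i[of k] Lu \<mu>_nonneg pos(1)[of k] by (intro mult_mono) auto
  finally have "\<alpha> k ^ 2 \<le> 1" using Lu by simp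
  with \<open>\<not> \<alpha> k \<le> 1\<close> show False by (simp add: abs_square_le_1)
qed

lemma gamma_ge_mu: "\<mu> \<le> \<gamma> k"
proof (induction k)
  case 0 show ?case using init(3) .
next
  case (Suc k)
  have "(1 - \<alpha> k) * \<mu> + \<alpha> k * \<mu> \<le> (1 - \<alpha> k) * \<gamma> k + \<alpha> k * \<mu>"
    using alpha_le_one_if_gamma_ge[OF Suc] Suc by (simp add: mult_left_mono)
  then show ?case using step_ii[of k] by (simp add: algebra_simps)
qed

lemma alpha_le_one: "\<alpha> k \<le> 1"
  using alpha_le_one_if_gamma_ge[OF gamma_ge_mu] .

lemma alpha_sq_ge: "\<gamma>dec * \<mu> / Lg \<le> \<alpha> k ^ 2"
proof -
  have "\<gamma>dec / Lg * \<mu> \<le> \<eta> k * \<gamma> (Suc k)"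
    using step_i[of k] gamma_ge_mu[of "Suc k"] \<mu>_nonneg pos(1)[of k] by (intro mult_mono) auto
  then show ?thesis by (simp add: alpha_sq_eq)
qed

lemma g_above_tangent: "g v + dg v \<bullet> (u - v) + \<mu> / 2 * norm (u - v)^2 \<le> g u"
  using strongly_convex_above_tangent[OF g_grad g_strong] .

lemma lyapunov_step_inexact:
  "Fval (x (Suc k)) - Fstar + \<gamma> (Suc k) / 2 * norm (xstar - z (Suc k))^2
   \<le> (1 - \<alpha> k) * (Fval (x k) - Fstar + \<gamma> k / 2 * norm (xstar - z k)^2)
     + \<alpha> k * eps k * norm (xstar - z (Suc k))"
proof (rule le_of_le_add_scaled)
  fix t :: real assume "0 < t" "t \<le> 1"
  define D where "D = norm (xstar - z (Suc k))"
  obtain s where s: "s \<in> subdiff (\<lambda>v. ereal (h v) + r v) (x (Suc k))"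
    and res: "norm (dg (y k) + (1 / \<eta> k) *\<^sub>R (x (Suc k) - y k) + s) < eps k + t"
    using inexact_prox_residual[OF \<open>0 < t\<close>] by blast
  have sub: "ereal (h (x (Suc k))) + r (x (Suc k)) + ereal (s \<bullet> (u - x (Suc k))) \<le> ereal (h u) + r u" for u
    using s by (simp add: subdiff_def)
  have Hs: "h (x (Suc k)) + real_of_ereal (r (x (Suc k))) + s \<bullet> (xstar - x (Suc k))
      \<le> h xstar + real_of_ereal (r xstar)"
    using sub[of xstar] by (subst (asm) r_x_finite, subst (asm) r_xstar_finite) simp
  have Hk: "h (x (Suc k)) + real_of_ereal (r (x (Suc k))) + s \<bullet> (x k - x (Suc k))
      \<le> h (x k) + real_of_ereal (r (x k))"
    using sub[of "x k"] by (subst (asm) r_x_finite, subst (asm) r_x_finite) simp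
  have "0 \<le> \<mu> / 2 * norm (x k - y k)^2" using \<mu>_nonneg by simp
  then have gk: "g (y k) + dg (y k) \<bullet> (x k - y k) \<le> g (x k)"
    using g_above_tangent[of "y k" "x k"] by linarith
  from apg_step_estimate[OF Hs Hk step_v[of k] g_above_tangent gk pos(1) pos(2) alpha_le_one pos(3)
      \<mu>_nonneg _ _ step_iii step_vi] step_ii[of k]
  have est: "Fval (x (Suc k)) - Fstar + \<gamma> (Suc k) / 2 * D^2
      \<le> (1 - \<alpha> k) * (Fval (x k) - Fstar + \<gamma> k / 2 * norm (xstar - z k)^2)
        + \<alpha> k * ((dg (y k) + (1 / \<eta> k) *\<^sub>R (x (Suc k) - y k) + s) \<bullet> (z (Suc k) - xstar))"
    by (simp add: Fstar_eq Fval_def D_def add.assoc)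
  have "(dg (y k) + (1 / \<eta> k) *\<^sub>R (x (Suc k) - y k) + s) \<bullet> (z (Suc k) - xstar)
      \<le> norm (dg (y k) + (1 / \<eta> k) *\<^sub>R (x (Suc k) - y k) + s) * D"
    unfolding D_def by (metis norm_cauchy_schwarz norm_minus_commute)
  also have "\<dots> \<le> (eps k + t) * D" using res by (intro mult_right_mono) (auto simp: D_def)
  finally have "\<alpha> k * ((dg (y k) + (1 / \<eta> k) *\<^sub>R (x (Suc k) - y k) + s) \<bullet> (z (Suc k) - xstar))
      \<le> \<alpha> k * ((eps k + t) * D)"
    using pos(2)[of k] by (intro mult_left_mono) auto
  also have "\<dots> = \<alpha> k * eps k * D + t * (\<alpha> k * D)" by (simp add: algebra_simps)
  finally show "Fval (x (Suc k)) - Fstar + \<gamma> (Suc k) / 2 * norm (xstar - z (Suc k))^2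
      \<le> (1 - \<alpha> k) * (Fval (x k) - Fstar + \<gamma> k / 2 * norm (xstar - z k)^2)
        + \<alpha> k * eps k * norm (xstar - z (Suc k)) + t * (\<alpha> k * norm (xstar - z (Suc k)))"
    using est unfolding D_def by linarith
qed (use pos(2) in \<open>simp add: less_imp_le\<close>)

lemma Fval_quadratic_growth: "\<mu> / 2 * norm (x k - xstar)^2 \<le> Fval (x k) - Fstar"
proof -
  have "\<mu> / 2 * norm (x k - xstar)^2
      \<le> (g (x k) + (h (x k) + real_of_ereal (r (x k)))) - (g xstar + (h xstar + real_of_ereal (r xstar)))"
  proof (rule strongly_convex_minimizer_growth[OF g_strong \<mu>_nonneg econvex_add_convex_on[OF h_convex r_convex]])
    show "ereal (g xstar) + (ereal (h xstar) + r xstar) \<le> ereal (g w) + (ereal (h w) + r w)" for w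
      using F_min[of w] by (simp flip: F_split)
    show "ereal (h xstar) + r xstar = ereal (h xstar + real_of_ereal (r xstar))"
      by (subst r_xstar_finite) simp
    show "ereal (h (x k)) + r (x k) = ereal (h (x k) + real_of_ereal (r (x k)))"
      by (subst r_x_finite) simp
  qed (use r_not_minf in auto)
  then show ?thesis by (simp add: Fval_def Fstar_eq add.assoc)
qed

lemma y_0_eq_x_0: "y 0 = x 0"
proof -
  have "0 < \<alpha> 0 * \<gamma> 0 + \<gamma> (Suc 0)" using pos(2,3) by (simp add: add_pos_pos)
  then show ?thesis using step_iii[of 0] by (simp add: init(1) flip: scaleR_add_left)
qed

lemma norm_y_sub_le:
  assumes "norm (x k - p) \<le> R" "norm (z k - p) \<le> R"
  shows "norm (y k - p) \<le> R"
proof -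
  define l where "l = \<alpha> k * \<gamma> k / (\<alpha> k * \<gamma> k + \<gamma> (Suc k))"
  have AG: "0 < \<alpha> k * \<gamma> k" "0 < \<gamma> (Suc k)" using pos(2,3) by auto
  then have l: "0 \<le> l" "l \<le> 1" "1 - l = \<gamma> (Suc k) / (\<alpha> k * \<gamma> k + \<gamma> (Suc k))"
    by (auto simp: l_def field_simps)
  then have "y k = l *\<^sub>R z k + (1 - l) *\<^sub>R x k"
    by (simp add: step_iii[of k] l_def scaleR_add_right)
  then have "y k - p = l *\<^sub>R (z k - p) + (1 - l) *\<^sub>R (x k - p)"
    by (simp add: algebra_simps)
  then have "norm (y k - p) \<le> l * norm (z k - p) + (1 - l) * norm (x k - p)"
    using norm_triangle_ineq[of "l *\<^sub>R (z k - p)" "(1 - l) *\<^sub>R (x k - p)"] l(1,2) by simp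
  also have "\<dots> \<le> l * R + (1 - l) * R"
    using assms l by (intro add_mono mult_left_mono) auto
  finally show ?thesis by (simp add: algebra_simps)
qed

lemma Phi_gap_initial:
  "Phi dg h r (x 0) (y 0) (\<eta> 0) - Phi dg h r v (y 0) (\<eta> 0)
   \<le> dist0 (subdiff (\<lambda>v. ereal (g v + h v) + r v) (x 0)) ^ 2 / ereal (2 * Lu)"
proof (rule le_dist0_power2_divide[OF _ Lu(1)])
  fix s assume "s \<in> subdiff (\<lambda>v. ereal (g v + h v) + r v) (x 0)"
  then have "s \<in> subdiff (\<lambda>v. ereal (g v) + (ereal (h v) + r v)) (x 0)"
    by (simp only: F_split)
  then have "s - dg (x 0) \<in> subdiff (\<lambda>v. ereal (h v) + r v) (x 0)"
    using subdiff_add_differentiable[OF g_grad econvex_add_convex_on[OF h_convex r_convex]] r_not_minf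
    by simp
  from Phi_gap_le[OF this pos(1)[of 0] r_not_minf, of dg "y 0" v]
  have "Phi dg h r (x 0) (y 0) (\<eta> 0) - Phi dg h r v (y 0) (\<eta> 0) \<le> ereal (\<eta> 0 / 2 * norm s ^ 2)"
    by (simp add: y_0_eq_x_0)
  also have "\<dots> \<le> ereal (norm s ^ 2 / (2 * Lu))"
  proof -
    have "\<eta> 0 * norm s ^ 2 \<le> (1 / Lu) * norm s ^ 2" using step_i[of 0] by (intro mult_right_mono) auto
    then show ?thesis by simp
  qed
  finally show "Phi dg h r (x 0) (y 0) (\<eta> 0) - Phi dg h r v (y 0) (\<eta> 0) \<le> ereal (norm s ^ 2 / (2 * Lu))" .
qed

lemma Phi_gap_Suc:
  assumes E: "norm (dg (y (Suc k)) - dg (y k)) + norm (x (Suc k) - y (Suc k)) / \<eta> (Suc k)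
      + norm (x (Suc k) - y k) / \<eta> k \<le> E"
  shows "Phi dg h r (x (Suc k)) (y (Suc k)) (\<eta> (Suc k)) - Phi dg h r v (y (Suc k)) (\<eta> (Suc k))
    \<le> ereal ((eps k + E)^2 / (2 * Lu))"
proof -
  have "0 \<le> norm (x (Suc k) - y (Suc k)) / \<eta> (Suc k)" "0 \<le> norm (x (Suc k) - y k) / \<eta> k"
    using pos(1)[of k] pos(1)[of "Suc k"] by simp_all
  with E have "0 \<le> E" using norm_ge_zero[of "dg (y (Suc k)) - dg (y k)"] by linarith
  then have "0 \<le> eps k + E" using pos(4)[of k] by simp
  show ?thesis
  proof (rule ereal_le_of_le_add_scaled)
    fix t :: real assume t: "0 < t" "t \<le> 1"
    obtain s where s: "s \<in> subdiff (\<lambda>v. ereal (h v) + r v) (x (Suc k))"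
      and res: "norm (dg (y k) + (1 / \<eta> k) *\<^sub>R (x (Suc k) - y k) + s) < eps k + t"
      using inexact_prox_residual[OF t(1)] by blast
    define p where "p = dg (y (Suc k)) + (1 / \<eta> (Suc k)) *\<^sub>R (x (Suc k) - y (Suc k)) + s"
    have "norm p \<le> eps k + E + t"
      using norm_residual_shift_le[OF pos(1)[of k] pos(1)[of "Suc k"], of "dg (y (Suc k))" "x (Suc k)"
          "y (Suc k)" s "dg (y k)" "y k"] res E
      unfolding p_def by linarith
    then have "norm p ^ 2 \<le> (eps k + E + t)^2"
      by (rule power_mono) simp
    also have "\<dots> = (eps k + E)^2 + t * (2 * (eps k + E) + t)"
      by (simp add: power2_eq_square algebra_simps)
    also have "\<dots> \<le> (eps k + E)^2 + t * (2 * (eps k + E) + 1)"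
      using t by simp
    finally have p_sq: "norm p ^ 2 \<le> (eps k + E)^2 + t * (2 * (eps k + E) + 1)" .
    have "Phi dg h r (x (Suc k)) (y (Suc k)) (\<eta> (Suc k)) - Phi dg h r v (y (Suc k)) (\<eta> (Suc k))
        \<le> ereal (\<eta> (Suc k) / 2 * norm p ^ 2)"
      unfolding p_def by (rule Phi_gap_le[OF s pos(1) r_not_minf])
    also have "\<eta> (Suc k) / 2 * norm p ^ 2 \<le> (1 / Lu) / 2 * ((eps k + E)^2 + t * (2 * (eps k + E) + 1))"
      using step_i[of "Suc k"] pos(1)[of "Suc k"] p_sq Lu(1)
      by (intro mult_mono divide_right_mono) auto
    also have "(1 / Lu) / 2 * ((eps k + E)^2 + t * (2 * (eps k + E) + 1))
        = (eps k + E)^2 / (2 * Lu) + t * ((2 * (eps k + E) + 1) / (2 * Lu))"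
      by (simp add: field_simps add_divide_distrib)
    finally show "Phi dg h r (x (Suc k)) (y (Suc k)) (\<eta> (Suc k)) - Phi dg h r v (y (Suc k)) (\<eta> (Suc k))
        \<le> ereal ((eps k + E)^2 / (2 * Lu) + t * ((2 * (eps k + E) + 1) / (2 * Lu)))"
      by simp
  qed (use \<open>0 \<le> eps k + E\<close> Lu(1) in simp)
qed

end

section \<open>Summable error schedule\<close>

locale iapg_schedule = iapg +
  fixes c :: real
  assumes \<mu>_pos: "0 < \<mu>" and c: "0 < c" "c < 1"
    and eps_def: "\<And>k. 1 \<le> k \<Longrightarrow> eps k = eps 0 / (real k + 1) * sqrt (\<Prod>j<k. 1 - c * \<alpha> j)"
begin

definition rate :: "nat \<Rightarrow> real" where
  "rate k = (\<Prod>j<k. 1 - c * \<alpha> j)"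

definition \<kappa> :: real where
  "\<kappa> = Lg / (\<gamma>dec * \<mu>)"

definition lyap :: "nat \<Rightarrow> real" where
  "lyap k = Fval (x k) - Fstar + (1 - (1 - c) * \<alpha> k) * \<gamma> k / 2 * norm (xstar - z k)^2"

definition err_sum :: real where
  "err_sum = sqrt \<kappa> / (2 * (1 - c)^2 * Lu) * (\<Sum>i. eps 0 ^ 2 / (real i + 1)^2)"

definition radius :: "nat \<Rightarrow> real" where
  "radius k = sqrt (rate k) * sqrt (2 * (lyap 0 + err_sum) / \<mu>)"

lemma kappa_pos: "0 < \<kappa>"
  using Lg_pos \<gamma>dec \<mu>_pos by (simp add: \<kappa>_def)

lemma contraction_factor: "1 - c \<le> 1 - c * \<alpha> k" "0 < 1 - c * \<alpha> k" "1 - c * \<alpha> k \<le> 1"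
proof -
  show "1 - c \<le> 1 - c * \<alpha> k" using alpha_le_one[of k] c by (simp add: mult_left_le)
  then show "0 < 1 - c * \<alpha> k" using c by linarith
  show "1 - c * \<alpha> k \<le> 1" using pos(2)[of k] c by simp
qed

lemma rate_pos: "0 < rate k"
  unfolding rate_def using contraction_factor(2) by (intro prod_pos) auto

lemma rate_Suc: "rate (Suc k) = (1 - c * \<alpha> k) * rate k"
  by (simp add: rate_def)

lemma rate_Suc_le: "rate (Suc k) \<le> rate k"
  using rate_pos[of k] contraction_factor(3)[of k] by (simp add: rate_Suc mult_left_le_one_le)

lemma eps_sq: "eps k ^ 2 = eps 0 ^ 2 / (real k + 1)^2 * rate k"
proof -
  have "eps k = eps 0 / (real k + 1) * sqrt (rate k)"
    using eps_def[of k] by (cases k) (auto simp: rate_def)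
  then show ?thesis using rate_pos[of k] by (simp add: power_mult_distrib power_divide)
qed

lemma inv_alpha_le: "1 / \<alpha> k \<le> sqrt \<kappa>"
proof -
  have "1 / \<kappa> \<le> \<alpha> k ^ 2" using alpha_sq_ge[of k] by (simp add: \<kappa>_def)
  then have "1 / sqrt \<kappa> \<le> \<alpha> k"
    using pos(2)[of k] real_sqrt_le_mono[of "1 / \<kappa>" "\<alpha> k ^ 2"] by (simp add: real_sqrt_divide)
  then show ?thesis using pos(2)[of k] kappa_pos by (simp add: field_simps)
qed

lemma lyap_lower_bounds: "Fval (x k) - Fstar \<le> lyap k" "c * \<mu> / 2 * norm (xstar - z k)^2 \<le> lyap k"
proof -
  have "(1 - c) * \<alpha> k \<le> 1 - c" using mult_left_mono[OF alpha_le_one[of k], of "1 - c"] c by simp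
  then have coef: "c \<le> 1 - (1 - c) * \<alpha> k" by simp
  then show "Fval (x k) - Fstar \<le> lyap k"
    using c pos(3)[of k] by (simp add: lyap_def)
  have "c * \<mu> \<le> (1 - (1 - c) * \<alpha> k) * \<gamma> k"
    using coef gamma_ge_mu[of k] c \<mu>_nonneg by (intro mult_mono) auto
  then have "c * \<mu> / 2 * norm (xstar - z k)^2 \<le> (1 - (1 - c) * \<alpha> k) * \<gamma> k / 2 * norm (xstar - z k)^2"
    by (intro mult_right_mono divide_right_mono) auto
  then show "c * \<mu> / 2 * norm (xstar - z k)^2 \<le> lyap k"
    using Fstar_le[of k] by (simp add: lyap_def)
qed

lemma lyap_contraction:
  "(1 - \<alpha> k) * (Fval (x k) - Fstar + \<gamma> k / 2 * norm (xstar - z k)^2) \<le> (1 - c * \<alpha> k) * lyap k"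
proof -
  define Fd where "Fd = Fval (x k) - Fstar"
  define Q where "Q = \<gamma> k / 2 * norm (xstar - z k)^2"
  have "0 \<le> Q" using pos(3)[of k] by (simp add: Q_def)
  have lyap_split: "lyap k = Fd + (1 - (1 - c) * \<alpha> k) * Q"
    by (simp add: lyap_def Fd_def Q_def field_simps)
  have "(1 - \<alpha> k) * Fd \<le> (1 - c * \<alpha> k) * Fd"
    using Fstar_le[of k] c pos(2)[of k] by (intro mult_right_mono) (auto simp: Fd_def mult_le_cancel_right1)
  moreover have "(1 - \<alpha> k) * Q \<le> ((1 - c * \<alpha> k) * (1 - (1 - c) * \<alpha> k)) * Q"
  proof (rule mult_right_mono[OF _ \<open>0 \<le> Q\<close>])
    have "(1 - c * \<alpha> k) * (1 - (1 - c) * \<alpha> k) = 1 - \<alpha> k + c * (1 - c) * \<alpha> k ^ 2"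
      by (simp add: algebra_simps power2_eq_square)
    then show "1 - \<alpha> k \<le> (1 - c * \<alpha> k) * (1 - (1 - c) * \<alpha> k)" using c by simp
  qed
  moreover have "(1 - \<alpha> k) * (Fval (x k) - Fstar + \<gamma> k / 2 * norm (xstar - z k)^2)
      = (1 - \<alpha> k) * Fd + (1 - \<alpha> k) * Q"
    by (simp add: Fd_def Q_def distrib_left)
  moreover have "(1 - c * \<alpha> k) * lyap k = (1 - c * \<alpha> k) * Fd + ((1 - c * \<alpha> k) * (1 - (1 - c) * \<alpha> k)) * Q"
    using lyap_split by (simp add: distrib_left mult.assoc)
  ultimately show ?thesis by linarith
qed

lemma lyap_Suc_le: "lyap (Suc k) \<le> (1 - c * \<alpha> k) * lyap k + sqrt \<kappa> * eps k ^ 2 / (2 * (1 - c) * Lu)"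
proof -
  define D where "D = norm (xstar - z (Suc k))"
  define A where "A = Fval (x k) - Fstar + \<gamma> k / 2 * norm (xstar - z k)^2"
  define \<theta> where "\<theta> = (1 - c) * \<alpha> (Suc k)"
  have "0 < \<theta>" using c pos(2) by (simp add: \<theta>_def)
  have step: "Fval (x (Suc k)) - Fstar + \<gamma> (Suc k) / 2 * D^2 \<le> (1 - \<alpha> k) * A + \<alpha> k * eps k * D"
    using lyapunov_step_inexact[of k] by (simp add: A_def D_def)
  txt \<open>Young's inequality spends the slack \<open>\<theta> \<gamma>\<^sub>k\<^sub>+\<^sub>1/2 \<parallel>x\<^sup>* - z\<^sub>k\<^sub>+\<^sub>1\<parallel>\<^sup>2\<close> by which
    \<open>lyap (Suc k)\<close> falls short of the left-hand side of \<open>lyapunov_step_inexact\<close>.\<close>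
  have "\<alpha> k * eps k * D \<le> (\<theta> * \<gamma> (Suc k)) / 2 * D^2 + (\<alpha> k * eps k)^2 / (2 * (\<theta> * \<gamma> (Suc k)))"
    using mult_le_half_sq_add[of "\<theta> * \<gamma> (Suc k)"] \<open>0 < \<theta>\<close> pos(3) by simp
  also have "(\<alpha> k * eps k)^2 / (2 * (\<theta> * \<gamma> (Suc k))) = eps k ^ 2 / (2 * (1 - c)) * (\<eta> k * (1 / \<alpha> (Suc k)))"
    using c pos(2)[of "Suc k"] pos(3)[of "Suc k"]
    by (simp add: power_mult_distrib alpha_sq_eq \<theta>_def field_simps)
  also have "\<dots> \<le> eps k ^ 2 / (2 * (1 - c)) * ((1 / Lu) * sqrt \<kappa>)"
    using c Lu(1) step_i[of k] inv_alpha_le[of "Suc k"] pos(1)[of k] pos(2)[of "Suc k"]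
    by (intro mult_left_mono mult_mono) auto
  finally have young: "\<alpha> k * eps k * D \<le> \<theta> * \<gamma> (Suc k) / 2 * D^2 + sqrt \<kappa> * eps k ^ 2 / (2 * (1 - c) * Lu)"
    by (simp add: ac_simps)
  have "lyap (Suc k) = Fval (x (Suc k)) - Fstar + \<gamma> (Suc k) / 2 * D^2 - \<theta> * \<gamma> (Suc k) / 2 * D^2"
    by (simp add: lyap_def D_def \<theta>_def field_simps)
  moreover have "(1 - \<alpha> k) * A \<le> (1 - c * \<alpha> k) * lyap k"
    using lyap_contraction by (simp add: A_def)
  ultimately show ?thesis using step young by linarith
qed

lemma lyap_le_partial_sum:
  "lyap k \<le> rate k * (lyap 0 + sqrt \<kappa> / (2 * (1 - c)^2 * Lu) * (\<Sum>i<k. eps 0 ^ 2 / (real i + 1)^2))"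
proof (induction k)
  case 0 show ?case by (simp add: rate_def)
next
  case (Suc k)
  define q where "q = sqrt \<kappa> * eps 0 ^ 2 / (2 * Lu * (real k + 1)^2)"
  define T where "T = sqrt \<kappa> / (2 * (1 - c)^2 * Lu) * (\<Sum>i<k. eps 0 ^ 2 / (real i + 1)^2)"
  have "0 \<le> q" using Lu(1) kappa_pos by (simp add: q_def)
  have "1 - c \<noteq> 0" using c by simp
  have "sqrt \<kappa> * eps k ^ 2 / (2 * (1 - c) * Lu) = rate k * q / (1 - c)"
    using \<open>1 - c \<noteq> 0\<close> Lu(1) by (subst eps_sq[of k]) (simp add: q_def field_simps)
  also have "\<dots> = (1 - c) * (rate k * q) / (1 - c)^2"
    using \<open>1 - c \<noteq> 0\<close> by (simp add: power2_eq_square)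
  also have "\<dots> \<le> (1 - c * \<alpha> k) * (rate k * q) / (1 - c)^2"
    using contraction_factor(1)[of k] rate_pos[of k] \<open>0 \<le> q\<close>
    by (intro divide_right_mono mult_right_mono) auto
  finally have err: "sqrt \<kappa> * eps k ^ 2 / (2 * (1 - c) * Lu) \<le> (1 - c * \<alpha> k) * (rate k * q) / (1 - c)^2" .
  have IH: "(1 - c * \<alpha> k) * lyap k \<le> (1 - c * \<alpha> k) * (rate k * (lyap 0 + T))"
    using Suc.IH contraction_factor(2)[of k] by (simp add: T_def)
  have "rate (Suc k) * (lyap 0 + sqrt \<kappa> / (2 * (1 - c)^2 * Lu) * (\<Sum>i<Suc k. eps 0 ^ 2 / (real i + 1)^2))
      = (1 - c * \<alpha> k) * (rate k * (lyap 0 + T)) + (1 - c * \<alpha> k) * (rate k * q) / (1 - c)^2"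
    using \<open>1 - c \<noteq> 0\<close> Lu(1) by (simp add: rate_Suc T_def q_def field_simps)
  with lyap_Suc_le[of k] err IH show ?case by linarith
qed

lemma lyap_le_rate: "lyap k \<le> rate k * (lyap 0 + err_sum)"
proof -
  have "summable (\<lambda>i::nat. 1 / (real i + 1)^2)"
    using sums_summable[OF inverse_squares_sums] by (simp add: add.commute)
  from summable_mult[OF this, of "eps 0 ^ 2"]
  have "summable (\<lambda>i::nat. eps 0 ^ 2 / (real i + 1)^2)" by simp
  then have "(\<Sum>i<k. eps 0 ^ 2 / (real i + 1)^2) \<le> (\<Sum>i. eps 0 ^ 2 / (real i + 1)^2)"
    by (rule sum_le_suminf) auto
  then have "sqrt \<kappa> / (2 * (1 - c)^2 * Lu) * (\<Sum>i<k. eps 0 ^ 2 / (real i + 1)^2) \<le> err_sum"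
    unfolding err_sum_def using Lu(1) c kappa_pos by (intro mult_left_mono) auto
  then have "rate k * (lyap 0 + sqrt \<kappa> / (2 * (1 - c)^2 * Lu) * (\<Sum>i<k. eps 0 ^ 2 / (real i + 1)^2))
      \<le> rate k * (lyap 0 + err_sum)"
    using rate_pos[of k] by (intro mult_left_mono) auto
  with lyap_le_partial_sum[of k] show ?thesis by linarith
qed

lemma lyap_0_add_err_sum_nonneg: "0 \<le> lyap 0 + err_sum"
  using lyap_le_rate[of 0] lyap_lower_bounds(1)[of 0] Fstar_le[of 0] by (simp add: rate_def)

lemma norm_sub_xstar_le_radius:
  assumes "c * \<mu> / 2 * norm (p - xstar)^2 \<le> lyap k"
  shows "norm (p - xstar) \<le> radius k / sqrt c"
proof -
  have "c * \<mu> / 2 * norm (p - xstar)^2 \<le> rate k * (lyap 0 + err_sum)"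
    using assms lyap_le_rate[of k] by linarith
  then have "norm (p - xstar)^2 \<le> rate k * (2 * (lyap 0 + err_sum) / \<mu>) / c"
    using c \<mu>_pos by (simp add: field_simps)
  then have "sqrt (norm (p - xstar)^2) \<le> sqrt (rate k * (2 * (lyap 0 + err_sum) / \<mu>) / c)"
    by (rule real_sqrt_le_mono)
  then show ?thesis by (simp add: radius_def real_sqrt_mult real_sqrt_divide)
qed

lemma norm_x_sub_xstar_le: "norm (x k - xstar) \<le> radius k / sqrt c"
proof (rule norm_sub_xstar_le_radius)
  have "c * \<mu> / 2 * norm (x k - xstar)^2 \<le> \<mu> / 2 * norm (x k - xstar)^2"
    using c \<mu>_nonneg by (intro mult_right_mono) (auto simp: mult_left_le_one_le)
  with Fval_quadratic_growth[of k] lyap_lower_bounds(1)[of k] show "c * \<mu> / 2 * norm (x k - xstar)^2 \<le> lyap k"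
    by linarith
qed

lemma norm_z_sub_xstar_le: "norm (z k - xstar) \<le> radius k / sqrt c"
  by (rule norm_sub_xstar_le_radius) (use lyap_lower_bounds(2)[of k] in \<open>simp only: norm_minus_commute\<close>)

lemma norm_y_sub_xstar_le: "norm (y k - xstar) \<le> radius k / sqrt c"
  using norm_y_sub_le[OF norm_x_sub_xstar_le norm_z_sub_xstar_le] .

lemma radius_Suc_le: "radius (Suc k) \<le> radius k"
  unfolding radius_def using rate_Suc_le[of k] lyap_0_add_err_sum_nonneg \<mu>_pos
  by (intro mult_right_mono real_sqrt_le_mono) auto

lemma Phi_gap_Suc_le_radius:
  "Phi dg h r (x (Suc k)) (y (Suc k)) (\<eta> (Suc k)) - Phi dg h r v (y (Suc k)) (\<eta> (Suc k))
   \<le> ereal ((eps k + 3 * Lg * (radius (Suc k) + radius k) / (\<gamma>dec * sqrt c))^2 / (2 * Lu))"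
proof (rule Phi_gap_Suc)
  define R where "R i = radius i / sqrt c" for i
  define L where "L = Lg / \<gamma>dec"
  have "0 \<le> L" "Lg \<le> L" using Lg_pos \<gamma>dec by (simp_all add: L_def le_divide_eq)
  have div_eta: "norm v / \<eta> i \<le> L * norm v" for v i
    using inv_eta_le[of i] mult_right_mono[of "1 / \<eta> i" L "norm v"] by (simp add: L_def)
  have x_R: "norm (x i - xstar) \<le> R i" and y_R: "norm (y i - xstar) \<le> R i" for i
    using norm_x_sub_xstar_le norm_y_sub_xstar_le by (simp_all add: R_def)
  have "R (Suc k) \<le> R k" using radius_Suc_le[of k] c by (simp add: R_def divide_right_mono)
  have dist_le: "norm (a - b) \<le> R i + R j" if "norm (a - xstar) \<le> R i" "norm (b - xstar) \<le> R j" for a b i j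
    using norm_diff_triangle_le[OF that(1), of b "R j"] that(2) by (simp add: norm_minus_commute)
  have "norm (dg (y (Suc k)) - dg (y k)) + norm (x (Suc k) - y (Suc k)) / \<eta> (Suc k)
      + norm (x (Suc k) - y k) / \<eta> k
      \<le> L * (norm (y (Suc k) - y k) + norm (x (Suc k) - y (Suc k)) + norm (x (Suc k) - y k))"
    using g_lip[of "y (Suc k)" "y k"] mult_right_mono[OF \<open>Lg \<le> L\<close>, of "norm (y (Suc k) - y k)"]
      div_eta[of "x (Suc k) - y (Suc k)" "Suc k"] div_eta[of "x (Suc k) - y k" k]
    by (simp add: distrib_left)
  also have "\<dots> \<le> L * ((R (Suc k) + R k) + (R (Suc k) + R (Suc k)) + (R (Suc k) + R k))"
    using dist_le[OF y_R y_R, of "Suc k" k] dist_le[OF x_R y_R, of "Suc k" "Suc k"]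
      dist_le[OF x_R y_R, of "Suc k" k] \<open>0 \<le> L\<close>
    by (intro mult_left_mono add_mono) assumption+
  also have "\<dots> \<le> L * (3 * R (Suc k) + 3 * R k)"
    using \<open>R (Suc k) \<le> R k\<close> \<open>0 \<le> L\<close> by (intro mult_left_mono) auto
  also have "\<dots> = 3 * Lg * (radius (Suc k) + radius k) / (\<gamma>dec * sqrt c)"
    using c \<gamma>dec by (simp add: L_def R_def field_simps)
  finally show "norm (dg (y (Suc k)) - dg (y k)) + norm (x (Suc k) - y (Suc k)) / \<eta> (Suc k)
      + norm (x (Suc k) - y k) / \<eta> k \<le> 3 * Lg * (radius (Suc k) + radius k) / (\<gamma>dec * sqrt c)" .
qed

end

theorem lemma4p2:
  fixes g h :: "'a::euclidean_space \<Rightarrow> real"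
    and dg dh :: "'a \<Rightarrow> 'a"
    and r :: "'a \<Rightarrow> ereal"
    and \<mu> Lg Lh \<gamma>dec Lu c Fstar :: real
    and xstar :: 'a
    and x z y :: "nat \<Rightarrow> 'a"
    and \<eta> \<alpha> \<gamma> eps :: "nat \<Rightarrow> real"
  defines "H \<equiv> (\<lambda>v. ereal (h v) + r v)"
    and "F \<equiv> (\<lambda>v. ereal (g v + h v) + r v)"
  assumes g_grad: "\<And>v. (g has_derivative (\<lambda>d. dg v \<bullet> d)) (at v)"
    and g_convex: "convex_on UNIV g"
    and \<mu>_nonneg: "\<mu> \<ge> 0"
    and g_strong: "\<And>u v t. 0 \<le> t \<Longrightarrow> t \<le> 1 \<Longrightarrow>
        g ((1 - t) *\<^sub>R u + t *\<^sub>R v) \<le> (1 - t) * g u + t * g v - \<mu> / 2 * t * (1 - t) * norm (u - v)^2"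
    and Lg_pos: "Lg > 0"
    and g_lip: "\<And>u v. norm (dg u - dg v) \<le> Lg * norm (u - v)"
    and h_grad: "\<And>v. (h has_derivative (\<lambda>d. dh v \<bullet> d)) (at v)"
    and h_convex: "convex_on UNIV h"
    and h_lip: "\<And>u v. norm (dh u - dh v) \<le> Lh * norm (u - v)"
    and r_proper: "eproper r" and r_closed: "eclosed r" and r_convex: "econvex r"
    and F_min: "\<And>v. F xstar \<le> F v" and Fstar_def: "F xstar = ereal Fstar"
    and \<gamma>dec: "0 < \<gamma>dec" "\<gamma>dec < 1"
    and Lu: "Lu > 0" "\<mu> \<le> Lu" "Lu \<le> Lg"
    and pos: "\<And>k. \<eta> k > 0" "\<And>k. \<alpha> k > 0" "\<And>k. \<gamma> k > 0" "\<And>k. eps k \<ge> 0"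
    and init: "x 0 = z 0" "H (x 0) \<noteq> \<infinity>" "\<gamma> 0 \<ge> \<mu>"
    and step_i: "\<And>k. \<gamma>dec / Lg < \<eta> k \<and> \<eta> k \<le> 1 / Lu"
    and step_ii: "\<And>k. \<gamma> (Suc k) = \<alpha> k ^ 2 / \<eta> k \<and> \<alpha> k ^ 2 / \<eta> k = (1 - \<alpha> k) * \<gamma> k + \<alpha> k * \<mu>"
    and step_iii: "\<And>k. y k = (1 / (\<alpha> k * \<gamma> k + \<gamma> (Suc k))) *\<^sub>R
                           ((\<alpha> k * \<gamma> k) *\<^sub>R z k + \<gamma> (Suc k) *\<^sub>R x k)"
    and step_iv: "\<And>k. dist0 {dg (y k) + (1 / \<eta> k) *\<^sub>R (x (Suc k) - y k) + s | s. s \<in> subdiff H (x (Suc k))}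
                     \<le> ereal (eps k)"
    and step_v: "\<And>k. g (x (Suc k)) \<le> g (y k) + dg (y k) \<bullet> (x (Suc k) - y k)
                        + norm (x (Suc k) - y k)^2 / (2 * \<eta> k)"
    and step_vi: "\<And>k. z (Suc k) = x k + (1 / \<alpha> k) *\<^sub>R (x (Suc k) - x k)"
    and \<mu>_pos: "\<mu> > 0"
    and c: "0 < c" "c < 1"
    and eps0: "eps 0 > 0"
    and eps_def: "\<And>k. k \<ge> 1 \<Longrightarrow>
        eps k = eps 0 / (real k + 1) * sqrt (\<Prod>j<k. 1 - c * \<alpha> j)"
  shows "\<forall>k xs. (\<forall>v. Phi dg h r xs (y k) (\<eta> k) \<le> Phi dg h r v (y k) (\<eta> k)) \<longrightarrow>
    (let \<kappa> = Lg / (\<gamma>dec * \<mu>);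
         \<psi>0 = real_of_ereal (F (x 0)) - Fstar
               + (1 - (1 - c) * \<alpha> 0) * \<gamma> 0 / 2 * norm (xstar - z 0)^2;
         S = sqrt \<kappa> / (2 * (1 - c)^2 * Lu) * (\<Sum>i. eps 0 ^ 2 / (real i + 1)^2);
         \<delta> = (\<lambda>i. sqrt (\<Prod>j<i. 1 - c * \<alpha> j) * sqrt (2 * (\<psi>0 + S) / \<mu>));
         gap = Phi dg h r (x k) (y k) (\<eta> k) - Phi dg h r xs (y k) (\<eta> k)
     in (if k = 0 then gap \<le> dist0 (subdiff F (x 0)) ^ 2 / ereal (2 * Lu)
         else gap \<le> ereal ((eps (k - 1) + 3 * Lg * (\<delta> k + \<delta> (k - 1)) / (\<gamma>dec * sqrt c))^2 / (2 * Lu))))"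
proof -
  txt \<open>The bound holds for every comparison point.\<close>
  interpret iapg_schedule g h dg r \<mu> Lg \<gamma>dec Lu Fstar xstar x z y \<eta> \<alpha> \<gamma> eps c
  proof unfold_locales
    show "r v \<noteq> -\<infinity>" for v using r_proper by (simp add: eproper_def)
    show "ereal (g xstar + h xstar) + r xstar \<le> ereal (g v + h v) + r v" for v
      using F_min by (simp add: F_def)
    show "ereal (g xstar + h xstar) + r xstar = ereal Fstar" using Fstar_def by (simp add: F_def)
    show "r (x 0) \<noteq> \<infinity>" using init(2) by (simp add: H_def)
    show "dist0 {dg (y k) + (1 / \<eta> k) *\<^sub>R (x (Suc k) - y k) + s | s.
        s \<in> subdiff (\<lambda>v. ereal (h v) + r v) (x (Suc k))} \<le> ereal (eps k)" for k
      using step_iv[of k] by (simp add: H_def)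
  qed (fact assms)+
  have \<psi>0: "real_of_ereal (F (x 0)) - Fstar + (1 - (1 - c) * \<alpha> 0) * \<gamma> 0 / 2 * norm (xstar - z 0)^2 = lyap 0"
    using F_x_eq[of 0] by (simp add: F_def lyap_def)
  show ?thesis
    unfolding Let_def \<kappa>_def[symmetric] err_sum_def[symmetric] \<psi>0 rate_def[symmetric] radius_def[symmetric]
  proof (intro allI impI)
    fix k xs
    show "if k = 0 then Phi dg h r (x k) (y k) (\<eta> k) - Phi dg h r xs (y k) (\<eta> k) \<le> dist0 (subdiff F (x 0))^2 / ereal (2 * Lu)
      else Phi dg h r (x k) (y k) (\<eta> k) - Phi dg h r xs (y k) (\<eta> k)
        \<le> ereal ((eps (k - 1) + 3 * Lg * (radius k + radius (k - 1)) / (\<gamma>dec * sqrt c))^2 / (2 * Lu))"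
      using Phi_gap_initial[of xs] Phi_gap_Suc_le_radius[of "k - 1" xs] by (cases k) (simp_all add: F_def)
  qed
qed

end
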